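(* Suppose $\{\mathcal{G}_k\}$ is uniformly jointly strongly connected with constant $B\ge1$. Then an algorithm in $\mathcal{A}_{\rm ave}$ achieves global asymptotic consensus if either $$\sum_{s=0}^\infty\ \prod_{k=s(n-1)B}^{(s+1)(n-1)B-1}\alpha_k=\infty$$ or $$\sum_{s=0}^\infty\ \prod_{k=s(n-1)B}^{(s+1)(n-1)B-1}(1-\alpha_k-\eta_k)=\infty.$$
   Context: Network of nodes $\mathcal{V}=\{1,\dots,n\}$, $n\ge 3$, discrete time, states $x_i(k)\in\mathbb{R}$. At each time $k$ a digraph $\mathcal{G}_k=(\mathcal{V},\mathcal{E}_k)$ is given; $j$ is a neighbor of $i$ at time $k$ if $(j,i)\in\mathcal{E}_k$, every node is always its own neighbor; $\mathcal{N}_i(k)$ is the neighbor set. The algorithm is $$x_i(k+1)=\eta_k x_i(k)+\alpha_k\min_{j\in\mathcal{N}_i(k)}x_j(k)+(1-\eta_k-\alpha_k)\max_{j\in\mathcal{N}_i(k)}x_j(k),$$ with node-independent parameters; $\mathcal{A}_{\rm ave}$ consists of those with $\eta_k\in(0,1]$, $\alpha_k\in[0,1-\eta_k]$ for all $k$. Global asymptotic consensus: for every initial time $k_0\ge0$ and initial value $x(k_0)=x^0\in\mathbb{R}^n$ there is $z_*$ with $x_i(k)\to z_*$ for all $i$. A digraph is strongly connected if every node is reachable from every other node by a directed path. $\mathcal{G}([k_1,k_2])=(\mathcal{V},\cup_{k\in[k_1,k_2]}\mathcal{E}_k)$. $\{\mathcal{G}_k\}$ is uniformly jointly strongly connected if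 there is an integer $B\ge1$ with $\mathcal{G}([k,k+B-1])$ strongly connected for all $k\ge0$. *)

theory Defs
  imports "HOL-Analysis.Analysis"
begin

text \<open>Nodes are 0,...,n-1. At time k the digraph has edge set E k; an edge (j,i)
  means j is a neighbor of i. Every node is its own neighbor.\<close>

definition nbrs :: "nat \<Rightarrow> (nat \<Rightarrow> (nat \<times> nat) set) \<Rightarrow> nat \<Rightarrow> nat \<Rightarrow> nat set" where
  "nbrs n E k i = insert i {j. j < n \<and> (j, i) \<in> E k}"

definition step ::
  "nat \<Rightarrow> (nat \<Rightarrow> (nat \<times> nat) set) \<Rightarrow> (nat \<Rightarrow> real) \<Rightarrow> (nat \<Rightarrow> real)
   \<Rightarrow> nat \<Rightarrow> (nat \<Rightarrow> real) \<Rightarrow> (nat \<Rightarrow> real)" where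
  "step n E \<eta> \<alpha> k x = (\<lambda>i. \<eta> k * x i
       + \<alpha> k * Min (x ` nbrs n E k i)
       + (1 - \<eta> k - \<alpha> k) * Max (x ` nbrs n E k i))"

fun traj ::
  "nat \<Rightarrow> (nat \<Rightarrow> (nat \<times> nat) set) \<Rightarrow> (nat \<Rightarrow> real) \<Rightarrow> (nat \<Rightarrow> real)
   \<Rightarrow> nat \<Rightarrow> (nat \<Rightarrow> real) \<Rightarrow> nat \<Rightarrow> (nat \<Rightarrow> real)" where
  "traj n E \<eta> \<alpha> k0 x0 0 = x0"
| "traj n E \<eta> \<alpha> k0 x0 (Suc m) = step n E \<eta> \<alpha> (k0 + m) (traj n E \<eta> \<alpha> k0 x0 m)"

definition in_A_ave :: "(nat \<Rightarrow> real) \<Rightarrow> (nat \<Rightarrow> real) \<Rightarrow> bool" where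
  "in_A_ave \<eta> \<alpha> \<longleftrightarrow> (\<forall>k. 0 < \<eta> k \<and> \<eta> k \<le> 1 \<and> 0 \<le> \<alpha> k \<and> \<alpha> k \<le> 1 - \<eta> k)"

definition strongly_connected :: "nat \<Rightarrow> (nat \<times> nat) set \<Rightarrow> bool" where
  "strongly_connected n Ed \<longleftrightarrow> (\<forall>i<n. \<forall>j<n. (i, j) \<in> (Ed \<inter> ({..<n} \<times> {..<n}))\<^sup>*)"

definition UJSC :: "nat \<Rightarrow> (nat \<Rightarrow> (nat \<times> nat) set) \<Rightarrow> nat \<Rightarrow> bool" where
  "UJSC n E B \<longleftrightarrow> B \<ge> 1 \<and> (\<forall>k. strongly_connected n (\<Union>t\<in>{k..k + B - 1}. E t))"

definition global_consensus ::
  "nat \<Rightarrow> (nat \<Rightarrow> (nat \<times> nat) set) \<Rightarrow> (nat \<Rightarrow> real) \<Rightarrow> (nat \<Rightarrow> real) \<Rightarrow> bool" where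
  "global_consensus n E \<eta> \<alpha> \<longleftrightarrow>
     (\<forall>k0 x0. \<exists>z. \<forall>i<n. (\<lambda>m. traj n E \<eta> \<alpha> k0 x0 m i) \<longlonglongrightarrow> z)"

end

theory Submission
  imports Defs
begin

(* Fix a run x(m) = x(k0+m) of the algorithm and write M(m), m(m) for the
   largest and smallest node value and D(m) = M(m) - m(m) for the spread.  Every update is
   a convex combination of values of the previous step, so M decreases and m increases.
   The weight alpha sits on the minimum over the neighbourhood, so if node a is already
   at least c*D(m0) below the old maximum M(m0) and a is a neighbour of b at time t, then
   one step later b is at least alpha(t)*c*D(m0) below M(m0).  Starting from a node
   realising the minimum, the set of nodes "pulled down" in this sense strictly grows
   during each window of B steps (joint strong connectivity yields a crossing edge), so
   after T = (n-1)B steps it contains all nodes: D contracts by the factor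
   1 - prod(alpha over the window).  If these products have a divergent sum, D -> 0, and
   the monotone bounds M, m squeeze all states to a common limit.  The case of the
   coefficients 1 - alpha - eta is reduced to the first one by negating the states,
   which swaps the roles of min and max. *)

lemma rtrancl_crossing_edge:
  assumes "(i, j) \<in> R\<^sup>*" "i \<in> S" "j \<notin> S"
  shows "\<exists>a b. (a, b) \<in> R \<and> a \<in> S \<and> b \<notin> S"
  using assms by (induction rule: rtrancl_induct) auto

lemma contraction_exp_bound:
  fixes D p :: "nat \<Rightarrow> real" and f :: "nat \<Rightarrow> nat"
  assumes D_nonneg: "\<And>m. 0 \<le> D m"
    and contr: "\<And>j. D (f (Suc j)) \<le> (1 - p j) * D (f j)"
  shows "D (f j) \<le> exp (- (\<Sum>u<j. p u)) * D (f 0)"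
proof (induction j)
  case 0
  then show ?case by simp
next
  case (Suc j)
  have "D (f (Suc j)) \<le> (1 - p j) * D (f j)" by (rule contr)
  also have "\<dots> \<le> exp (- p j) * D (f j)"
    using D_nonneg exp_ge_add_one_self[of "- p j"] by (intro mult_right_mono) auto
  also have "\<dots> \<le> exp (- p j) * (exp (- (\<Sum>u<j. p u)) * D (f 0))"
    using Suc by (intro mult_left_mono) auto
  also have "\<dots> = exp (- (\<Sum>u<Suc j. p u)) * D (f 0)"
    by (simp add: exp_add[symmetric] algebra_simps)
  finally show ?case .
qed

lemma contraction_tendsto_zero:
  fixes D p :: "nat \<Rightarrow> real" and f :: "nat \<Rightarrow> nat"
  assumes dec: "decseq D" and D_nonneg: "\<And>m. 0 \<le> D m"
    and p_nonneg: "\<And>j. 0 \<le> p j" and diverge: "\<not> summable p"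
    and contr: "\<And>j. D (f (Suc j)) \<le> (1 - p j) * D (f j)"
  shows "D \<longlonglongrightarrow> 0"
proof (rule LIMSEQ_I)
  fix r :: real assume r: "0 < r"
  have "\<exists>j. D (f 0) / r < (\<Sum>u<j. p u)"
  proof (rule ccontr)
    assume "\<not> ?thesis"
    then have "summable p"
      by (intro summableI_nonneg_bounded[where x = "D (f 0) / r"]) (auto simp: p_nonneg not_less)
    with diverge show False by contradiction
  qed
  then obtain j where j: "D (f 0) / r < (\<Sum>u<j. p u)" by blast
  have "D (f 0) < r * (\<Sum>u<j. p u)" using j r by (simp add: pos_divide_less_eq mult.commute)
  also have "\<dots> < r * exp (\<Sum>u<j. p u)"
    using r exp_ge_add_one_self[of "\<Sum>u<j. p u"] by (intro mult_strict_left_mono) linarith+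
  finally have "D (f 0) < r * exp (\<Sum>u<j. p u)" .
  then have small: "exp (- (\<Sum>u<j. p u)) * D (f 0) < r" by (simp add: exp_minus field_simps)
  show "\<exists>m0. \<forall>m\<ge>m0. norm (D m - 0) < r"
  proof (intro exI allI impI)
    fix m assume "f j \<le> m"
    then have "D m \<le> D (f j)" using dec by (simp add: decseq_def)
    then show "norm (D m - 0) < r"
      using contraction_exp_bound[of D f p j] D_nonneg contr small by force
  qed
qed

locale run =
  fixes n :: nat and E :: "nat \<Rightarrow> (nat \<times> nat) set" and \<eta> \<alpha> :: "nat \<Rightarrow> real"
    and k0 :: nat and x0 :: "nat \<Rightarrow> real"
  assumes n_pos: "n \<ge> 1" and admissible: "in_A_ave \<eta> \<alpha>"
begin

abbreviation x :: "nat \<Rightarrow> nat \<Rightarrow> real" where "x m \<equiv> traj n E \<eta> \<alpha> k0 x0 m"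

definition xmax :: "nat \<Rightarrow> real" where "xmax m = Max (x m ` {..<n})"
definition xmin :: "nat \<Rightarrow> real" where "xmin m = Min (x m ` {..<n})"
definition spread :: "nat \<Rightarrow> real" where "spread m = xmax m - xmin m"

lemma params: "0 \<le> \<eta> k" "0 \<le> \<alpha> k" "0 \<le> 1 - \<eta> k - \<alpha> k"
  using admissible unfolding in_A_ave_def by (auto simp: less_imp_le)

lemma nodes_nonempty: "{..<n} \<noteq> {}"
  using n_pos by (simp add: lessThan_empty_iff)

lemma nbrs_props:
  assumes "i < n"
  shows "nbrs n E k i \<subseteq> {..<n}" "finite (nbrs n E k i)" "i \<in> nbrs n E k i"
  using assms unfolding nbrs_def by auto

lemma x_Suc: "x (Suc m) i = \<eta> (k0+m) * x m i + \<alpha> (k0+m) * Min (x m ` nbrs n E (k0+m) i)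
   + (1 - \<eta> (k0+m) - \<alpha> (k0+m)) * Max (x m ` nbrs n E (k0+m) i)"
  by (simp add: step_def)

lemma x_bounds: "i < n \<Longrightarrow> xmin m \<le> x m i \<and> x m i \<le> xmax m"
  unfolding xmax_def xmin_def by auto

lemma nbr_bounds:
  assumes "i < n"
  shows "xmin m \<le> Min (x m ` nbrs n E k i)" "Max (x m ` nbrs n E k i) \<le> xmax m"
    "Min (x m ` nbrs n E k i) \<le> Max (x m ` nbrs n E k i)"
proof -
  note N = nbrs_props[OF assms, of k]
  show "xmin m \<le> Min (x m ` nbrs n E k i)" "Max (x m ` nbrs n E k i) \<le> xmax m"
    using N unfolding xmin_def xmax_def by (auto intro!: Min_antimono Max_mono)
  show "Min (x m ` nbrs n E k i) \<le> Max (x m ` nbrs n E k i)"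
    using N by (meson Max_ge Min_le finite_imageI imageI order.trans)
qed

text \<open>Each update is a convex combination, hence stays within the previous range.\<close>
lemma x_Suc_bounds:
  assumes "i < n"
  shows "xmin m \<le> x (Suc m) i \<and> x (Suc m) i \<le> xmax m"
proof -
  let ?a = "\<eta> (k0+m)" and ?b = "\<alpha> (k0+m)" and ?c = "1 - \<eta> (k0+m) - \<alpha> (k0+m)"
  let ?lo = "Min (x m ` nbrs n E (k0+m) i)" and ?hi = "Max (x m ` nbrs n E (k0+m) i)"
  have w: "?a \<ge> 0" "?b \<ge> 0" "?c \<ge> 0" using params by auto
  have h: "xmin m \<le> x m i" "x m i \<le> xmax m" "xmin m \<le> ?lo" "?lo \<le> ?hi" "?hi \<le> xmax m"
    using x_bounds[OF assms] nbr_bounds[OF assms] by auto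
  have "?a * x m i \<le> ?a * xmax m" "?b * ?lo \<le> ?b * xmax m" "?c * ?hi \<le> ?c * xmax m"
    "?a * xmin m \<le> ?a * x m i" "?b * xmin m \<le> ?b * ?lo" "?c * xmin m \<le> ?c * ?hi"
    using h w by (auto intro!: mult_left_mono)
  moreover have "?a * xmax m + ?b * xmax m + ?c * xmax m = xmax m"
    "?a * xmin m + ?b * xmin m + ?c * xmin m = xmin m"
    by (simp_all add: algebra_simps)
  ultimately show ?thesis unfolding x_Suc by linarith
qed

lemma xmax_decseq: "decseq xmax"
  by (rule decseq_SucI) (use nodes_nonempty x_Suc_bounds in \<open>simp add: xmax_def[of "Suc _"]\<close>)

lemma xmin_incseq: "incseq xmin"
  by (rule incseq_SucI) (use nodes_nonempty x_Suc_bounds in \<open>simp add: xmin_def[of "Suc _"]\<close>)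

lemma spread_nonneg: "0 \<le> spread m"
  using x_bounds[of 0 m] n_pos unfolding spread_def by fastforce

lemma spread_decseq: "decseq spread"
  using xmax_decseq xmin_incseq unfolding spread_def decseq_def incseq_def
  by (meson diff_mono)

text \<open>Key step: the weight alpha on the neighbourhood minimum transmits a gap below any
  upper bound M of the current states from a neighbour j to node i.\<close>
lemma gap_transfer:
  assumes "i < n" "j \<in> nbrs n E (k0+m) i" "xmax m \<le> M"
  shows "\<alpha> (k0+m) * (M - x m j) \<le> M - x (Suc m) i"
proof -
  let ?a = "\<eta> (k0+m)" and ?b = "\<alpha> (k0+m)" and ?c = "1 - \<eta> (k0+m) - \<alpha> (k0+m)"
  let ?lo = "Min (x m ` nbrs n E (k0+m) i)" and ?hi = "Max (x m ` nbrs n E (k0+m) i)"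
  have w: "?a \<ge> 0" "?b \<ge> 0" "?c \<ge> 0" using params by auto
  have h: "x m i \<le> M" "?hi \<le> M" "?lo \<le> x m j"
    using x_bounds[OF assms(1)] nbr_bounds(2)[OF assms(1)] assms nbrs_props[OF assms(1)]
    by (auto intro: order.trans)
  have "M - x (Suc m) i = ?a * (M - x m i) + ?b * (M - ?lo) + ?c * (M - ?hi)"
    unfolding x_Suc by (simp add: algebra_simps)
  moreover have "?a * (M - x m i) \<ge> 0" "?c * (M - ?hi) \<ge> 0" using w h by auto
  moreover have "?b * (M - ?lo) \<ge> ?b * (M - x m j)" using w h by (auto intro!: mult_left_mono)
  ultimately show ?thesis by linarith
qed

definition weight :: "nat \<Rightarrow> nat \<Rightarrow> real" where
  "weight m0 r = (\<Prod>t\<in>{k0+m0..<k0+m0+r}. \<alpha> t)"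

definition pulled :: "nat \<Rightarrow> nat \<Rightarrow> nat set" where
  "pulled m0 r = {i. i < n \<and> weight m0 r * spread m0 \<le> xmax m0 - x (m0+r) i}"

lemma pulled_nodes: "pulled m0 r \<subseteq> {..<n}"
  unfolding pulled_def by auto

lemma finite_pulled: "finite (pulled m0 r)"
  using pulled_nodes finite_subset by blast

lemma pulled_spreads:
  assumes a: "a \<in> pulled m0 r" and b: "b < n" and nbr: "a \<in> nbrs n E (k0+m0+r) b"
  shows "b \<in> pulled m0 (Suc r)"
proof -
  have a_gap: "weight m0 r * spread m0 \<le> xmax m0 - x (m0+r) a"
    using a unfolding pulled_def by auto
  have "xmax (m0+r) \<le> xmax m0" using xmax_decseq by (simp add: decseq_def)
  then have "\<alpha> (k0+(m0+r)) * (xmax m0 - x (m0+r) a) \<le> xmax m0 - x (Suc (m0+r)) b"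
    using nbr by (intro gap_transfer[OF b]) (simp_all add: add.assoc)
  moreover have "\<alpha> (k0+(m0+r)) * (weight m0 r * spread m0)
      \<le> \<alpha> (k0+(m0+r)) * (xmax m0 - x (m0+r) a)"
    using a_gap params by (auto intro!: mult_left_mono)
  ultimately show ?thesis
    using b unfolding pulled_def weight_def by (simp add: prod.atLeastLessThan_Suc algebra_simps)
qed

lemma pulled_mono: "r \<le> r' \<Longrightarrow> pulled m0 r \<subseteq> pulled m0 r'"
proof (rule lift_Suc_mono_le[of "pulled m0"])
  show "pulled m0 r \<subseteq> pulled m0 (Suc r)" for r
    using pulled_spreads pulled_nodes nbrs_props by blast
qed

text \<open>A node realising the minimum is pulled with weight 1.\<close>
lemma pulled_start: "pulled m0 0 \<noteq> {}"
proof -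
  have "xmin m0 \<in> x m0 ` {..<n}" unfolding xmin_def using nodes_nonempty by (intro Min_in) auto
  then obtain i where "i < n" "x m0 i = xmin m0" by auto
  then have "i \<in> pulled m0 0" unfolding pulled_def weight_def spread_def by simp
  then show ?thesis by auto
qed

text \<open>Joint strong connectivity over a window of B steps yields an edge leaving the pulled
  set, so the pulled set strictly grows during every window until it is everything.\<close>
lemma pulled_grows:
  assumes U: "UJSC n E B" and incomplete: "pulled m0 (w*B) \<noteq> {..<n}"
  shows "pulled m0 (w*B) \<subset> pulled m0 (Suc w * B)"
proof -
  have B: "B \<ge> 1" using U unfolding UJSC_def by auto
  obtain i where i: "i \<in> pulled m0 (w*B)" using pulled_start pulled_mono[of 0 "w*B" m0] by blast
  obtain j where j: "j < n" "j \<notin> pulled m0 (w*B)" using incomplete pulled_nodes by blast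
  let ?k = "k0+m0+w*B"
  let ?R = "(\<Union>t\<in>{?k..?k + B - 1}. E t) \<inter> ({..<n} \<times> {..<n})"
  have "(i, j) \<in> ?R\<^sup>*" using U i j pulled_nodes unfolding UJSC_def strongly_connected_def by blast
  then obtain a b where ab: "(a, b) \<in> ?R" "a \<in> pulled m0 (w*B)" "b \<notin> pulled m0 (w*B)"
    using rtrancl_crossing_edge[of i j ?R] i j by blast
  then obtain t where t: "t \<in> {?k..?k+B-1}" "(a, b) \<in> E t" "a < n" "b < n" by blast
  define r where "r = t - (k0+m0)"
  have r: "t = k0+m0+r" "w*B \<le> r" "Suc r \<le> Suc w * B" using t B unfolding r_def by auto
  have "a \<in> pulled m0 r" using pulled_mono[OF r(2)] ab by blast
  moreover have "a \<in> nbrs n E (k0+m0+r) b" using t r unfolding nbrs_def by auto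
  ultimately have "b \<in> pulled m0 (Suc r)" using pulled_spreads t by blast
  then have "b \<in> pulled m0 (Suc w * B)" using pulled_mono[OF r(3)] by blast
  then show ?thesis using pulled_mono[of "w*B" "Suc w * B"] ab by auto
qed

lemma pulled_card:
  assumes U: "UJSC n E B"
  shows "pulled m0 (w*B) = {..<n} \<or> w+1 \<le> card (pulled m0 (w*B))"
proof (induction w)
  case 0
  then show ?case using pulled_start finite_pulled by (auto simp: card_gt_0_iff Suc_le_eq)
next
  case (Suc w)
  show ?case
  proof (cases "pulled m0 (w*B) = {..<n}")
    case True
    then show ?thesis using pulled_mono[of "w*B" "Suc w * B" m0] pulled_nodes[of m0 "Suc w * B"] by auto
  next
    case False
    then have "card (pulled m0 (w*B)) < card (pulled m0 (Suc w * B))"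
      using pulled_grows[OF U] finite_pulled by (intro psubset_card_mono)
    then show ?thesis using Suc False by auto
  qed
qed

lemma pulled_all:
  assumes U: "UJSC n E B" shows "pulled m0 ((n-1)*B) = {..<n}"
  using pulled_card[OF U, of m0 "n-1"] n_pos pulled_nodes[of m0 "(n-1)*B"]
  by (metis card_lessThan card_seteq finite_lessThan le_add_diff_inverse2)

lemma spread_contracts:
  assumes U: "UJSC n E B"
  shows "spread (m0+(n-1)*B) \<le> (1 - weight m0 ((n-1)*B)) * spread m0"
proof -
  let ?T = "(n-1)*B"
  have "x (m0+?T) i \<le> xmax m0 - weight m0 ?T * spread m0" if "i < n" for i
  proof -
    have "i \<in> pulled m0 ?T" using pulled_all[OF U, of m0] that by simp
    then show ?thesis unfolding pulled_def by simp
  qed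
  then have "xmax (m0+?T) \<le> xmax m0 - weight m0 ?T * spread m0"
    unfolding xmax_def[of "m0+?T"] using nodes_nonempty by (simp add: Max_le_iff)
  moreover have "xmin m0 \<le> xmin (m0+?T)" using xmin_incseq by (simp add: incseq_def)
  moreover have "(1 - weight m0 ?T) * spread m0 = spread m0 - weight m0 ?T * spread m0"
    by (simp add: algebra_simps)
  ultimately show ?thesis using spread_def[of m0] spread_def[of "m0+?T"] by linarith
qed

text \<open>Vanishing spread forces consensus: the monotone bounds xmax and xmin converge to a
  common limit and squeeze every state.\<close>
lemma consensus_if_spread_vanishes:
  assumes "spread \<longlonglongrightarrow> 0"
  shows "\<exists>z. \<forall>i<n. (\<lambda>m. x m i) \<longlonglongrightarrow> z"
proof -
  have "xmin 0 \<le> xmax m" for m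
  proof -
    have "xmin 0 \<le> xmin m" using xmin_incseq by (simp add: incseq_def)
    also have "\<dots> \<le> xmax m" using spread_nonneg[of m] unfolding spread_def by simp
    finally show ?thesis .
  qed
  then obtain L where L: "xmax \<longlonglongrightarrow> L" using decseq_convergent[OF xmax_decseq] by blast
  have "(\<lambda>m. xmax m - spread m) \<longlonglongrightarrow> L - 0" using L assms by (intro tendsto_diff)
  then have L': "xmin \<longlonglongrightarrow> L" unfolding spread_def by simp
  have "(\<lambda>m. x m i) \<longlonglongrightarrow> L" if "i < n" for i
    using x_bounds[OF that] by (intro tendsto_sandwich[OF _ _ L' L]) auto
  then show ?thesis by blast
qed

text \<open>The
  windows [s(n-1)B, (s+1)(n-1)B) of absolute time are visited from s = k0 on: the run
  enters window k0+j at its own time sample j.\<close>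
lemma consensus_alpha:
  assumes U: "UJSC n E B" and n2: "n \<ge> 2"
    and diverge: "\<not> summable (\<lambda>s. \<Prod>k\<in>{s*(n-1)*B..<(s+1)*(n-1)*B}. \<alpha> k)"
  shows "\<exists>z. \<forall>i<n. (\<lambda>m. x m i) \<longlonglongrightarrow> z"
proof -
  define T where "T = (n-1)*B"
  define p where "p s = (\<Prod>k\<in>{s*T..<s*T+T}. \<alpha> k)" for s
  define sample where "sample j = (k0+j)*T - k0" for j
  have "T \<ge> 1" using U n2 unfolding T_def UJSC_def by simp
  then have start: "k0 + sample j = (k0+j)*T" for j
    unfolding sample_def by (metis le_add1 le_add_diff_inverse mult.commute mult_le_mono1 mult_1 order_trans)
  have "spread (sample (Suc j)) \<le> (1 - p (j+k0)) * spread (sample j)" for j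
  proof -
    have "sample (Suc j) = sample j + T" using start[of j] start[of "Suc j"] by simp
    moreover have "weight (sample j) T = p (j+k0)"
      unfolding weight_def p_def start by (simp add: add.commute)
    ultimately show ?thesis using spread_contracts[OF U, of "sample j"] unfolding T_def by simp
  qed
  moreover have "\<not> summable (\<lambda>j. p (j+k0))"
  proof -
    have "{s*(n-1)*B..<(s+1)*(n-1)*B} = {s*T..<s*T+T}" for s
      unfolding T_def by (simp add: add_mult_distrib mult.assoc add.commute)
    then have "\<not> summable p" using diverge unfolding p_def by simp
    then show ?thesis by (simp add: summable_iff_shift)
  qed
  moreover have "0 \<le> p s" for s unfolding p_def using params by (auto intro: prod_nonneg)
  ultimately have "spread \<longlonglongrightarrow> 0"
    by (intro contraction_tendsto_zero[OF spread_decseq spread_nonneg, of "\<lambda>j. p (j+k0)" sample])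
      auto
  then show ?thesis by (rule consensus_if_spread_vanishes)
qed

end

text \<open>Negating the states swaps the roles of min and max: the run with coefficient
  1 - eta - alpha on the minimum from -x0 is the negated original run.\<close>
lemma traj_negate:
  "traj n E \<eta> (\<lambda>k. 1 - \<eta> k - \<alpha> k) k0 (\<lambda>i. - x0 i) m = (\<lambda>i. - traj n E \<eta> \<alpha> k0 x0 m i)"
proof (induction m)
  case 0
  then show ?case by simp
next
  case (Suc m)
  have nbrs: "finite (nbrs n E k i)" "nbrs n E k i \<noteq> {}" for k i unfolding nbrs_def by auto
  have image_neg: "(\<lambda>j. - f j) ` N = uminus ` (f ` N)" for f :: "nat \<Rightarrow> real" and N
    by auto
  have min_max_neg: "Min ((\<lambda>j. - f j) ` N) = - Max (f ` N)" "Max ((\<lambda>j. - f j) ` N) = - Min (f ` N)"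
    if "finite N" "N \<noteq> {}" for f :: "nat \<Rightarrow> real" and N
    using that by (simp_all add: image_neg)
  show ?case
    unfolding traj.simps Suc.IH by (intro ext) (simp add: step_def min_max_neg[OF nbrs] algebra_simps)
qed

theorem theorem5:
  fixes n B :: nat and E :: "nat \<Rightarrow> (nat \<times> nat) set" and \<eta> \<alpha> :: "nat \<Rightarrow> real"
  assumes "n \<ge> 3"
    and "\<And>k. E k \<subseteq> {..<n} \<times> {..<n}"
    and "UJSC n E B"
    and "in_A_ave \<eta> \<alpha>"
    and "\<not> summable (\<lambda>s. \<Prod>k\<in>{s*(n-1)*B..<(s+1)*(n-1)*B}. \<alpha> k)
         \<or> \<not> summable (\<lambda>s. \<Prod>k\<in>{s*(n-1)*B..<(s+1)*(n-1)*B}. 1 - \<alpha> k - \<eta> k)"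
  shows "global_consensus n E \<eta> \<alpha>"
  unfolding global_consensus_def
proof (intro allI)
  fix k0 x0
  have n2: "n \<ge> 2" using assms(1) by simp
  define \<alpha>' where "\<alpha>' = (\<lambda>k. 1 - \<eta> k - \<alpha> k)"
  have "in_A_ave \<eta> \<alpha>'" using assms(4) unfolding in_A_ave_def \<alpha>'_def by auto
  then interpret mirrored: run n E \<eta> \<alpha>' k0 "\<lambda>i. - x0 i" using n2 by unfold_locales simp
  interpret original: run n E \<eta> \<alpha> k0 x0 using n2 assms(4) by unfold_locales simp
  show "\<exists>z. \<forall>i<n. (\<lambda>m. traj n E \<eta> \<alpha> k0 x0 m i) \<longlonglongrightarrow> z"
    using assms(5)
  proof
    assume "\<not> summable (\<lambda>s. \<Prod>k\<in>{s*(n-1)*B..<(s+1)*(n-1)*B}. 1 - \<alpha> k - \<eta> k)"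
    then have "\<not> summable (\<lambda>s. \<Prod>k\<in>{s*(n-1)*B..<(s+1)*(n-1)*B}. \<alpha>' k)"
      unfolding \<alpha>'_def by (simp add: algebra_simps)
    then obtain z where "\<forall>i<n. (\<lambda>m. - traj n E \<eta> \<alpha> k0 x0 m i) \<longlonglongrightarrow> z"
      using mirrored.consensus_alpha[OF assms(3) n2] unfolding \<alpha>'_def traj_negate by blast
    then have "\<forall>i<n. (\<lambda>m. traj n E \<eta> \<alpha> k0 x0 m i) \<longlonglongrightarrow> - z"
      using tendsto_minus by fastforce
    then show ?thesis by blast
  qed (rule original.consensus_alpha[OF assms(3) n2])
qed

end
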